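(* Let $\mathcal{A}=\mathbb{R}[x^2,x^3]$ (the subring of $\mathbb{R}[x]$ generated over $\mathbb{R}$ by $x^2$ and $x^3$), with field of fractions $\mathcal{F}$, and let $\mathcal{Z}=\{\alpha x^2+\beta x^3\mid \alpha,\beta\in\mathcal{A}\}$ be the ideal of elements of $\mathcal{A}$ with zero constant term. Then every causal (single-input single-output) transfer function, i.e. every $p\in\mathcal{P}=\{n/d\mid n\in\mathcal{A},\ d\in\mathcal{A}\setminus\mathcal{Z}\}$, is stabilizable.
   Context: For a single-input single-output plant $p\in\mathcal{F}$ and controller $c\in\mathcal{F}$ with $1+pc\neq0$, the closed-loop matrix is $H(p,c)=\begin{pmatrix}(1+pc)^{-1} & -p(1+pc)^{-1}\\ c(1+pc)^{-1} & (1+pc)^{-1}\end{pmatrix}$; $p$ is stabilizable if there exists $c\in\mathcal{F}$ with $1+pc\neq0$ such that all entries of $H(p,c)$ lie in $\mathcal{A}$. *)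

theory Defs
  imports "HOL-Computational_Algebra.Polynomial_Factorial"
begin

inductive_set Aring :: "real poly set" where
  const: "[:c:] \<in> Aring"
| sq: "monom 1 2 \<in> Aring"
| cube: "monom 1 3 \<in> Aring"
| add: "p \<in> Aring \<Longrightarrow> q \<in> Aring \<Longrightarrow> p + q \<in> Aring"
| neg: "p \<in> Aring \<Longrightarrow> - p \<in> Aring"
| mult: "p \<in> Aring \<Longrightarrow> q \<in> Aring \<Longrightarrow> p * q \<in> Aring"

definition Zideal :: "real poly set" where
  "Zideal = {a * monom 1 2 + b * monom 1 3 | a b. a \<in> Aring \<and> b \<in> Aring}"

definition Aemb :: "real poly fract set" where
  "Aemb = to_fract ` Aring"

text \<open>The field of fractions F of A, realised inside the fraction field of R[x].\<close>
definition Ffield :: "real poly fract set" where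
  "Ffield = {to_fract n / to_fract d | n d. n \<in> Aring \<and> d \<in> Aring \<and> d \<noteq> 0}"

definition Pcausal :: "real poly fract set" where
  "Pcausal = {to_fract n / to_fract d | n d. n \<in> Aring \<and> d \<in> Aring - Zideal}"

definition closed_loop :: "real poly fract \<Rightarrow> real poly fract \<Rightarrow> real poly fract list" where
  "closed_loop p c = [inverse (1 + p * c), - p * inverse (1 + p * c),
                      c * inverse (1 + p * c), inverse (1 + p * c)]"

definition stabilizable :: "real poly fract \<Rightarrow> bool" where
  "stabilizable p \<longleftrightarrow> (\<exists>c \<in> Ffield. 1 + p * c \<noteq> 0 \<and> set (closed_loop p c) \<subseteq> Aemb)"

end

theory Submission
  imports Defs "HOL-Computational_Algebra.Field_as_Ring"
begin

text \<open>
  The map \<open>f \<mapsto> coeff f 1\<close> behaves like the derivation \<open>f \<mapsto> f'(0)\<close>, and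
  \<open>\<real>[x\<^sup>2, x\<^sup>3]\<close> is exactly its kernel; a causal denominator is one with
  nonzero constant term. Writing \<open>p = a/b\<close> with \<open>a, b\<close> coprime in \<open>\<real>[x]\<close>,
  causality of \<open>p\<close> means \<open>b(0) \<noteq> 0\<close> and \<open>(a/b)'(0) = 0\<close>. Take a Bezout identity
  \<open>aV + bW = 1\<close>, moved along \<open>(V, W) \<mapsto> (V + bt, W - at)\<close> so that \<open>(bV)'(0) = 0\<close>
  and \<open>W \<noteq> 0\<close>. The controller \<open>c = bV/(bW)\<close> has closed-loop entries \<open>bW, -aW, bV\<close>,
  and since \<open>a\<close> and \<open>b\<close> are proportional to first order at \<open>0\<close>, all of them
  lie in the kernel.
\<close>

lemma coeff_mult_1:
  fixes p q :: "'a::comm_semiring_0 poly"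
  shows "coeff (p * q) 1 = coeff p 0 * coeff q 1 + coeff p 1 * coeff q 0"
  by (simp add: coeff_mult atMost_Suc algebra_simps)

lemma monom_2_3_mult_in_Aring: "monom 1 2 * q \<in> Aring \<and> monom 1 3 * q \<in> Aring"
proof (induction q rule: pCons_induct)
  case 0
  show ?case using Aring.const[of 0] by simp
next
  case (pCons c q)
  have "monom 1 2 * pCons c q = [:c:] * monom 1 2 + monom 1 3 * q"
    "monom 1 3 * pCons c q = [:c:] * monom 1 3 + monom 1 2 * (monom 1 2 * q)"
    by (simp_all add: monom_Suc numeral_3_eq_3 numeral_2_eq_2 algebra_simps)
  then show ?case using pCons.IH by (metis Aring.const Aring.sq Aring.cube Aring.mult Aring.add)
qed

lemma Aring_iff_coeff_1: "p \<in> Aring \<longleftrightarrow> coeff p 1 = 0"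
proof
  assume "coeff p 1 = 0"
  obtain a b r where p: "p = pCons a (pCons b r)" by (metis pCons_cases)
  with \<open>coeff p 1 = 0\<close> have "p = [:a:] + monom 1 2 * r"
    by (simp add: monom_Suc numeral_2_eq_2)
  then show "p \<in> Aring" using monom_2_3_mult_in_Aring Aring.const Aring.add by metis
next
  assume "p \<in> Aring"
  then show "coeff p 1 = 0"
    by (induction rule: Aring.induct) (auto simp: coeff_mult_1[simplified] coeff_monom)
qed

lemma coeff_0_neq_0_if_notin_Zideal:
  assumes "d \<in> Aring - Zideal" shows "coeff d 0 \<noteq> 0"
proof
  assume "coeff d 0 = 0"
  moreover have "coeff d 1 = 0" using assms Aring_iff_coeff_1 by blast
  moreover obtain r0 r1 s where "d = pCons (coeff d 0) (pCons (coeff d 1) (pCons r0 (pCons r1 s)))"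
    by (metis pCons_cases coeff_pCons_0 coeff_pCons_Suc One_nat_def)
  ultimately have "d = ([:r0:] + monom 1 2 * s) * monom 1 2 + [:r1:] * monom 1 3"
    by (simp add: monom_Suc numeral_3_eq_3 numeral_2_eq_2 algebra_simps)
  moreover have "[:r0:] + monom 1 2 * s \<in> Aring"
    using monom_2_3_mult_in_Aring Aring.const Aring.add by blast
  ultimately have "d \<in> Zideal" unfolding Zideal_def using Aring.const by blast
  with assms show False by blast
qed

lemma coeff_1_mult_proportional:
  fixes a b w :: "'a::comm_ring poly"
  assumes "coeff a 1 * coeff b 0 = coeff a 0 * coeff b 1"
  shows "coeff b 0 * coeff (a * w) 1 = coeff a 0 * coeff (b * w) 1"
proof -
  have "coeff b 0 * coeff (a * w) 1 - coeff a 0 * coeff (b * w) 1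
        = coeff w 0 * (coeff a 1 * coeff b 0 - coeff a 0 * coeff b 1)"
    unfolding coeff_mult_1 by (simp add: algebra_simps)
  with assms show ?thesis by simp
qed

lemma coeff_1_cancel_common_factor:
  fixes g a b :: "'a::idom poly"
  assumes "coeff (g * a) 1 = 0" "coeff (g * b) 1 = 0" "coeff g 0 \<noteq> 0"
  shows "coeff a 1 * coeff b 0 = coeff a 0 * coeff b 1"
proof -
  have "coeff g 0 * (coeff a 1 * coeff b 0 - coeff a 0 * coeff b 1)
        = coeff b 0 * coeff (g * a) 1 - coeff a 0 * coeff (g * b) 1"
    unfolding coeff_mult_1 by (simp add: algebra_simps)
  with assms show ?thesis by simp
qed

lemma bezout_coeff_1_eq_0:
  fixes a b V W :: "'a::idom poly"
  assumes bezout: "a * V + b * W = 1" and bV: "coeff (b * V) 1 = 0"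
    and cross: "coeff a 1 * coeff b 0 = coeff a 0 * coeff b 1" and b0: "coeff b 0 \<noteq> 0"
  shows "coeff (b * W) 1 = 0" and "coeff (a * W) 1 = 0"
proof -
  have "coeff b 0 * coeff (a * V) 1 = 0"
    using coeff_1_mult_proportional[OF cross] bV by simp
  then have "coeff (a * V) 1 = 0" using b0 by simp
  moreover have "coeff (a * V) 1 + coeff (b * W) 1 = 0"
    using arg_cong[OF bezout, of "\<lambda>p. coeff p 1"] by simp
  ultimately show bW: "coeff (b * W) 1 = 0" by simp
  have "coeff b 0 * coeff (a * W) 1 = 0"
    using coeff_1_mult_proportional[OF cross] bW by simp
  then show "coeff (a * W) 1 = 0" using b0 by simp
qed

lemma bezout_normalize_coeff_1:
  fixes a b X Y :: "'a::field poly"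
  assumes bezout: "a * X + b * Y = 1" and b0: "coeff b 0 \<noteq> 0"
  obtains V W where "a * V + b * W = 1" "coeff (b * V) 1 = 0" "W \<noteq> 0"
proof -
  define t where "t = monom (- coeff (b * X) 1 / (coeff b 0)\<^sup>2) 1"
  define V0 W0 where "V0 = X + b * t" and "W0 = Y - a * t"
  have bezout0: "a * V0 + b * W0 = 1"
    using bezout unfolding V0_def W0_def by (simp add: algebra_simps)
  have "coeff (b * V0) 1 = coeff (b * X) 1 + (coeff b 0)\<^sup>2 * coeff t 1"
    unfolding V0_def distrib_left coeff_add coeff_mult_1 mult.assoc[symmetric]
    by (simp add: t_def coeff_monom coeff_mult_0 power2_eq_square)
  then have bV0: "coeff (b * V0) 1 = 0"
    unfolding t_def using b0 by (simp add: coeff_monom)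
  show thesis
  proof (cases "W0 = 0")
    case False
    with bezout0 bV0 that show thesis by blast
  next
    case True
    with bezout0 have "a \<noteq> 0" by auto
    have "a * (V0 + b * monom 1 2) + b * (- a * monom 1 2) = 1"
      using bezout0 True by (simp add: algebra_simps)
    moreover have "coeff (b * (V0 + b * monom 1 2)) 1 = 0"
    proof -
      have "coeff (b * b * monom 1 2) 1 = 0"
        unfolding coeff_mult_1 by (simp add: coeff_monom)
      with bV0 show ?thesis by (simp add: algebra_simps)
    qed
    moreover have "- a * monom 1 2 \<noteq> 0" using \<open>a \<noteq> 0\<close> by simp
    ultimately show thesis using that by blast
  qed
qed

lemma Pcausal_bezout_fraction:
  assumes "p \<in> Pcausal"
  obtains a b X Y :: "real poly"
  where "p = to_fract a / to_fract b" and "a * X + b * Y = 1" and "coeff b 0 \<noteq> 0"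
    and "coeff a 1 * coeff b 0 = coeff a 0 * coeff b 1"
proof -
  obtain n d where p: "p = to_fract n / to_fract d" and "n \<in> Aring" "d \<in> Aring - Zideal"
    using assms unfolding Pcausal_def by blast
  then have n1: "coeff n 1 = 0" and d1: "coeff d 1 = 0" and d0: "coeff d 0 \<noteq> 0"
    using Aring_iff_coeff_1 coeff_0_neq_0_if_notin_Zideal by auto
  define g where "g = gcd n d"
  define a b where "a = n div g" and "b = d div g"
  have n: "n = g * a" and d: "d = g * b"
    unfolding a_def b_def g_def by simp_all
  have "g \<noteq> 0" using d0 d by auto
  obtain X Y where "X * n + Y * d = g"
    unfolding g_def using bezout_coefficients_fst_snd by blast
  then have "g * (a * X + b * Y) = g * 1" unfolding n d by (simp add: algebra_simps)
  then have "a * X + b * Y = 1" using \<open>g \<noteq> 0\<close> by simp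
  moreover have "coeff g 0 \<noteq> 0" "coeff b 0 \<noteq> 0" using d0 unfolding d coeff_mult_0 by auto
  moreover have "coeff a 1 * coeff b 0 = coeff a 0 * coeff b 1"
    using coeff_1_cancel_common_factor n1 d1 \<open>coeff g 0 \<noteq> 0\<close> unfolding n d by blast
  moreover have "p = to_fract a / to_fract b" using \<open>g \<noteq> 0\<close> unfolding p n d by simp
  ultimately show thesis using that by blast
qed

lemma closed_loop_bezout:
  fixes a b V W :: "real poly"
  assumes "a * V + b * W = 1" "b \<noteq> 0" "W \<noteq> 0"
  defines "p \<equiv> to_fract a / to_fract b" and "c \<equiv> to_fract (b * V) / to_fract (b * W)"
  shows "inverse (1 + p * c) = to_fract (b * W)"
    and "closed_loop p c = map to_fract [b * W, - (a * W), b * V, b * W]"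
proof -
  have "to_fract a * to_fract V + to_fract b * to_fract W = 1"
    using arg_cong[OF assms(1), of to_fract] by simp
  then have "1 + p * c = inverse (to_fract (b * W))"
    unfolding p_def c_def using assms(2,3) by (simp add: field_simps)
  then show inv: "inverse (1 + p * c) = to_fract (b * W)" by simp
  show "closed_loop p c = map to_fract [b * W, - (a * W), b * V, b * W]"
    unfolding closed_loop_def inv using assms(2,3) by (simp add: p_def c_def)
qed

theorem proposition5:
  assumes "p \<in> Pcausal"
  shows "stabilizable p"
proof -
  obtain a b X Y where p: "p = to_fract a / to_fract b" and "a * X + b * Y = 1"
    and b0: "coeff b 0 \<noteq> 0" and cross: "coeff a 1 * coeff b 0 = coeff a 0 * coeff b 1"
    using Pcausal_bezout_fraction[OF assms] .
  then obtain V W where bezout: "a * V + b * W = 1" and bV: "coeff (b * V) 1 = 0" and "W \<noteq> 0"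
    using bezout_normalize_coeff_1 by metis
  have "b \<noteq> 0" using b0 by auto
  define c where "c = to_fract (b * V) / to_fract (b * W)"
  have closed_loop_in_A: "b * W \<in> Aring" "- (a * W) \<in> Aring" "b * V \<in> Aring"
    using bezout_coeff_1_eq_0[OF bezout bV cross b0] bV by (simp_all add: Aring_iff_coeff_1)
  have "c \<in> Ffield"
    unfolding c_def Ffield_def using closed_loop_in_A \<open>b \<noteq> 0\<close> \<open>W \<noteq> 0\<close> mult_eq_0_iff by blast
  moreover have "1 + p * c \<noteq> 0"
    using closed_loop_bezout(1)[OF bezout \<open>b \<noteq> 0\<close> \<open>W \<noteq> 0\<close>] \<open>b \<noteq> 0\<close> \<open>W \<noteq> 0\<close>
    unfolding p c_def by auto
  moreover have "set (closed_loop p c) \<subseteq> Aemb"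
    unfolding p c_def closed_loop_bezout(2)[OF bezout \<open>b \<noteq> 0\<close> \<open>W \<noteq> 0\<close>] Aemb_def set_map
    using closed_loop_in_A by (intro image_mono) auto
  ultimately show ?thesis unfolding stabilizable_def by blast
qed

end
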